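(* Let $\mathcal{C}_1,\mathcal{C}_2,\mathcal{C}_3$ be pairwise disjoint maximal commuting classes of two-qubit Pauli operators ($d=4$), and suppose there is a maximal commuting class $\mathcal{S}$ consisting of one element from each of $\mathcal{C}_1$, $\mathcal{C}_2$, $\mathcal{C}_3$. Let $\mathcal{B}_i$ be the common eigenbasis of $\mathcal{C}_i$. Then every common eigenstate $|\psi\rangle$ of the operators in $\mathcal{S}$ saturates the uncertainty relation $\frac13\sum_{i=1}^3 H_2(\mathcal{B}_i\,\|\,|\psi\rangle)\ge 1$, i.e. $\frac13\sum_{i=1}^3 H_2(\mathcal{B}_i\,\|\,|\psi\rangle)= 1$.
   Context: Two-qubit Pauli operators are the tensor products $P_1\otimes P_2$ with $P_k\in\{I,X,Y,Z\}$. A maximal commuting class in $d=4$ is a set of $3$ mutually commuting non-identity two-qubit Pauli operators; its common eigenbasis is an orthonormal basis of $\mathbb{C}^4$. For an orthonormal basis $\mathcal{B}=\{|b^{(j)}\rangle\}_{j=1}^d$ and a unit vector $|\psi\rangle$, the collision entropy is $H_2(\mathcal{B}\,\|\,|\psi\rangle)=-\log_2\sum_{j=1}^d|\langle b^{(j)}|\psi\rangle|^4$. *)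

theory Defs
  imports "Jordan_Normal_Form.Matrix" Complex_Main
begin

(* Single-qubit Pauli matrices, encoded 0 = I, 1 = X, 2 = Y, 3 = Z *)
definition pauli1 :: "nat \<Rightarrow> complex mat" where
  "pauli1 k = (if k = 0 then mat_of_rows_list 2 [[1, 0], [0, 1]]
               else if k = 1 then mat_of_rows_list 2 [[0, 1], [1, 0]]
               else if k = 2 then mat_of_rows_list 2 [[0, -\<i>], [\<i>, 0]]
               else mat_of_rows_list 2 [[1, 0], [0, -1]])"

(* Two-qubit Pauli operator P_a \<otimes> P_b (Kronecker product, first factor = first qubit) *)
definition pauli2 :: "nat \<times> nat \<Rightarrow> complex mat" where
  "pauli2 p = mat 4 4 (\<lambda>(i, j). pauli1 (fst p) $$ (i div 2, j div 2) * pauli1 (snd p) $$ (i mod 2, j mod 2))"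

definition nonid_pauli_labels :: "(nat \<times> nat) set" where
  "nonid_pauli_labels = ({0..3} \<times> {0..3}) - {(0, 0)}"

definition max_commuting_class :: "(nat \<times> nat) set \<Rightarrow> bool" where
  "max_commuting_class C \<longleftrightarrow> C \<subseteq> nonid_pauli_labels \<and> card C = 3 \<and>
     (\<forall>p\<in>C. \<forall>q\<in>C. pauli2 p * pauli2 q = pauli2 q * pauli2 p)"

definition braket :: "complex vec \<Rightarrow> complex vec \<Rightarrow> complex" where
  "braket b \<psi> = (\<Sum>i<dim_vec \<psi>. cnj (b $ i) * \<psi> $ i)"

definition unit_vec4 :: "complex vec \<Rightarrow> bool" where
  "unit_vec4 \<psi> \<longleftrightarrow> \<psi> \<in> carrier_vec 4 \<and> braket \<psi> \<psi> = 1"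

definition orthonormal_basis4 :: "(nat \<Rightarrow> complex vec) \<Rightarrow> bool" where
  "orthonormal_basis4 b \<longleftrightarrow> (\<forall>j<4. b j \<in> carrier_vec 4) \<and>
     (\<forall>j<4. \<forall>k<4. braket (b j) (b k) = (if j = k then 1 else 0))"

definition eigenvector_of :: "complex mat \<Rightarrow> complex vec \<Rightarrow> bool" where
  "eigenvector_of A v \<longleftrightarrow> v \<noteq> 0\<^sub>v (dim_vec v) \<and> (\<exists>c. A *\<^sub>v v = c \<cdot>\<^sub>v v)"

definition common_eigenbasis :: "(nat \<times> nat) set \<Rightarrow> (nat \<Rightarrow> complex vec) \<Rightarrow> bool" where
  "common_eigenbasis C b \<longleftrightarrow> orthonormal_basis4 b \<and> (\<forall>j<4. \<forall>p\<in>C. eigenvector_of (pauli2 p) (b j))"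

definition collision_entropy :: "(nat \<Rightarrow> complex vec) \<Rightarrow> complex vec \<Rightarrow> real" where
  "collision_entropy b \<psi> = - log 2 (\<Sum>j<4. (cmod (braket (b j) \<psi>)) ^ 4)"

end

theory Submission
  imports Defs "Jordan_Normal_Form.Determinant"
begin

text \<open>
  Fix one class \<open>C\<close> with common eigenbasis \<open>B\<close>, let \<open>s\<close> be the element of \<open>S\<close> in \<open>C\<close> and
  \<open>c \<noteq> s\<close> another element of \<open>C\<close>. Since \<open>S\<close> is a maximal commuting class not containing \<open>c\<close>,
  some \<open>t \<in> S\<close> anticommutes with \<open>c\<close>. The traceless involutions \<open>s\<close>, \<open>c\<close>, \<open>s c\<close> force each
  of the four sign patterns of \<open>(s, c)\<close> to occur on exactly one vector of \<open>B\<close>. As \<open>\<psi>\<close> is an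
  eigenvector of \<open>s\<close>, it overlaps only the two basis vectors carrying its \<open>s\<close>-eigenvalue, and
  these are exchanged (up to a phase) by \<open>t\<close>, of which \<open>\<psi>\<close> is an eigenvector too. Hence both
  overlaps have squared modulus \<open>1/2\<close>, the collision sum is \<open>1/2\<close> and \<open>H\<^sub>2(B \<parallel> \<psi>) = 1\<close> for each
  of the three bases.
\<close>

subsection \<open>Single-qubit Pauli matrices\<close>

definition pauli1_entry :: "nat \<Rightarrow> nat \<Rightarrow> nat \<Rightarrow> complex" where
  "pauli1_entry k i j =
     (if k = 0 then (if i = j then 1 else 0)
      else if k = 1 then (if i = j then 0 else 1)
      else if k = 2 then (if i = j then 0 else if i = 0 then -\<i> else \<i>)
      else (if i = j then (if i = 0 then 1 else -1) else 0))"

definition pauli1_anticommute :: "nat \<Rightarrow> nat \<Rightarrow> bool" where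
  "pauli1_anticommute a b \<longleftrightarrow> a \<noteq> 0 \<and> b \<noteq> 0 \<and> a \<noteq> b"

lemma less_2_cases: "(i::nat) < 2 \<longleftrightarrow> i = 0 \<or> i = 1"
  by auto

lemma le_3_cases: "(a::nat) \<le> 3 \<longleftrightarrow> a = 0 \<or> a = 1 \<or> a = 2 \<or> a = 3"
  by auto

lemma sum_lessThan_2: "(\<Sum>i<2. f i) = f 0 + f (1::nat)"
  by (simp add: eval_nat_numeral)

lemma less_4_cases: "(i::nat) < 4 \<longleftrightarrow> i = 0 \<or> i = 1 \<or> i = 2 \<or> i = 3"
  by auto

lemma sum_lessThan_4: "(\<Sum>i<4. f i) = f 0 + f 1 + f 2 + f (3::nat)"
  by (simp add: eval_nat_numeral)

lemma mat2_eqI: "(\<And>i j. i < 2 \<Longrightarrow> j < 2 \<Longrightarrow> f (i, j) = g (i, j)) \<Longrightarrow> mat 2 2 f = mat 2 2 g"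
  by (rule eq_matI) auto

lemma mult_mat2:
  "mat 2 2 f * mat 2 2 g = mat 2 2 (\<lambda>(i, j). f (i, 0) * g (0, j) + f (i, 1) * g (1, j))"
  by (rule eq_matI) (auto simp: scalar_prod_def numeral_2_eq_2 row_def col_def)

lemma smult_mat2: "a \<cdot>\<^sub>m mat 2 2 f = mat 2 2 (\<lambda>ij. a * f ij)"
  by (rule eq_matI) auto

lemma one_mat2: "1\<^sub>m 2 = mat 2 2 (\<lambda>(i, j). if i = j then 1 else 0)"
  by (rule eq_matI) auto

lemma pauli1_eq_mat: "pauli1 k = mat 2 2 (\<lambda>(i, j). pauli1_entry k i j)"
  by (rule eq_matI) (auto simp: pauli1_def pauli1_entry_def less_2_cases mat_of_rows_list_def)

lemma pauli1_carrier: "pauli1 k \<in> carrier_mat 2 2"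
  unfolding pauli1_eq_mat by auto

lemma pauli1_square: "pauli1 a * pauli1 a = 1\<^sub>m 2"
  unfolding pauli1_eq_mat mult_mat2 one_mat2
  by (rule mat2_eqI) (cases "a = 0 \<or> a = 1 \<or> a = 2"; auto simp: less_2_cases pauli1_entry_def)

lemma pauli1_hermitian: "i < 2 \<Longrightarrow> j < 2 \<Longrightarrow> pauli1 k $$ (j, i) = cnj (pauli1 k $$ (i, j))"
  unfolding pauli1_eq_mat less_2_cases by (auto simp: pauli1_entry_def)

lemma pauli1_commutation:
  assumes "a \<le> 3" "b \<le> 3"
  shows "pauli1 a * pauli1 b = (if pauli1_anticommute a b then -1 else 1) \<cdot>\<^sub>m (pauli1 b * pauli1 a)"
  unfolding pauli1_eq_mat mult_mat2 smult_mat2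
  apply (rule mat2_eqI)
  using assms unfolding le_3_cases less_2_cases
  by (elim disjE; simp add: pauli1_entry_def pauli1_anticommute_def)

definition mat_trace :: "complex mat \<Rightarrow> complex" where
  "mat_trace A = (\<Sum>i<dim_row A. A $$ (i, i))"

lemma trace_mat2: "mat_trace (mat 2 2 f) = f (0, 0) + f (1, 1)"
  by (simp add: mat_trace_def sum_lessThan_2)

lemma trace_pauli1: "a \<le> 3 \<Longrightarrow> mat_trace (pauli1 a) = (if a = 0 then 2 else 0)"
  unfolding pauli1_eq_mat trace_mat2 le_3_cases by (elim disjE; simp add: pauli1_entry_def)

lemma trace_pauli1_mult:
  "a \<le> 3 \<Longrightarrow> b \<le> 3 \<Longrightarrow> mat_trace (pauli1 a * pauli1 b) = (if a = b then 2 else 0)"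
  unfolding pauli1_eq_mat mult_mat2 trace_mat2 le_3_cases by (elim disjE; simp add: pauli1_entry_def)

definition hermitian_mat :: "complex mat \<Rightarrow> bool" where
  "hermitian_mat A \<longleftrightarrow> (\<forall>i<dim_row A. \<forall>j<dim_row A. A $$ (j, i) = cnj (A $$ (i, j)))"

definition kron2 :: "complex mat \<Rightarrow> complex mat \<Rightarrow> complex mat" where
  "kron2 A B = mat 4 4 (\<lambda>(i, j). A $$ (i div 2, j div 2) * B $$ (i mod 2, j mod 2))"

lemma kron2_carrier: "kron2 A B \<in> carrier_mat 4 4"
  by (simp add: kron2_def)

lemma kron2_mult:
  assumes "A \<in> carrier_mat 2 2" "B \<in> carrier_mat 2 2" "C \<in> carrier_mat 2 2" "D \<in> carrier_mat 2 2"
  shows "kron2 A B * kron2 C D = kron2 (A * C) (B * D)"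
proof (rule eq_matI)
  fix i j assume "i < dim_row (kron2 (A * C) (B * D))" "j < dim_col (kron2 (A * C) (B * D))"
  then have ij: "i < 4" "j < 4" by (auto simp: kron2_def)
  have "(kron2 A B * kron2 C D) $$ (i, j) = (\<Sum>k<4. kron2 A B $$ (i, k) * kron2 C D $$ (k, j))"
    using ij by (simp add: kron2_def scalar_prod_def row_def col_def lessThan_atLeast0)
  also have "\<dots> = (\<Sum>k<2. A $$ (i div 2, k) * C $$ (k, j div 2)) *
                   (\<Sum>k<2. B $$ (i mod 2, k) * D $$ (k, j mod 2))"
    unfolding sum_lessThan_4 sum_lessThan_2 using ij by (simp add: kron2_def algebra_simps)
  also have "\<dots> = kron2 (A * C) (B * D) $$ (i, j)"
    using ij assms by (simp add: kron2_def scalar_prod_def row_def col_def lessThan_atLeast0)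
  finally show "(kron2 A B * kron2 C D) $$ (i, j) = kron2 (A * C) (B * D) $$ (i, j)" .
qed (auto simp: kron2_def)

lemma kron2_smult:
  assumes "A \<in> carrier_mat 2 2" "B \<in> carrier_mat 2 2"
  shows "kron2 (a \<cdot>\<^sub>m A) (b \<cdot>\<^sub>m B) = (a * b) \<cdot>\<^sub>m kron2 A B"
  using assms by (intro eq_matI) (auto simp: kron2_def less_4_cases)

lemma kron2_one: "kron2 (1\<^sub>m 2) (1\<^sub>m 2) = 1\<^sub>m 4"
  by (rule eq_matI) (auto simp: kron2_def less_4_cases)

lemma trace_kron2:
  assumes "A \<in> carrier_mat 2 2" "B \<in> carrier_mat 2 2"
  shows "mat_trace (kron2 A B) = mat_trace A * mat_trace B"
  using assms by (simp add: mat_trace_def kron2_def sum_lessThan_4 sum_lessThan_2 algebra_simps)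

lemma pauli2_eq_kron2: "pauli2 p = kron2 (pauli1 (fst p)) (pauli1 (snd p))"
  unfolding pauli2_def kron2_def ..

lemma pauli2_carrier: "pauli2 p \<in> carrier_mat 4 4"
  by (simp add: pauli2_eq_kron2 kron2_carrier)

lemma pauli2_dim [simp]: "dim_row (pauli2 p) = 4" "dim_col (pauli2 p) = 4"
  using pauli2_carrier[of p] by auto

lemma pauli2_square: "pauli2 p * pauli2 p = 1\<^sub>m 4"
  by (simp add: pauli2_eq_kron2 kron2_mult pauli1_carrier pauli1_square kron2_one)

lemma pauli2_hermitian: "hermitian_mat (pauli2 p)"
proof -
  have "pauli2 p $$ (j, i) = cnj (pauli2 p $$ (i, j))" if "i < 4" "j < 4" for i j
  proof -
    have "i div 2 < 2" "j div 2 < 2" "i mod 2 < 2" "j mod 2 < 2" using that by auto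
    then show ?thesis
      using that by (simp add: pauli2_def pauli1_hermitian[of "i div 2" "j div 2"]
                               pauli1_hermitian[of "i mod 2" "j mod 2"])
  qed
  then show ?thesis unfolding hermitian_mat_def pauli2_dim by blast
qed

definition pauli_labels_commute :: "nat \<times> nat \<Rightarrow> nat \<times> nat \<Rightarrow> bool" where
  "pauli_labels_commute p q \<longleftrightarrow>
     pauli1_anticommute (fst p) (fst q) = pauli1_anticommute (snd p) (snd q)"

lemma pauli2_commutation:
  assumes "p \<in> nonid_pauli_labels" "q \<in> nonid_pauli_labels"
  shows "pauli2 p * pauli2 q = (if pauli_labels_commute p q then 1 else -1) \<cdot>\<^sub>m (pauli2 q * pauli2 p)"
proof -
  have "fst p \<le> 3" "snd p \<le> 3" "fst q \<le> 3" "snd q \<le> 3"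
    using assms by (auto simp: nonid_pauli_labels_def)
  then show ?thesis
    unfolding pauli2_eq_kron2
    by (simp add: kron2_mult pauli1_carrier pauli1_commutation[of "fst p" "fst q"]
                  pauli1_commutation[of "snd p" "snd q"] pauli_labels_commute_def
                  kron2_smult[OF mult_carrier_mat[OF pauli1_carrier pauli1_carrier]
                                 mult_carrier_mat[OF pauli1_carrier pauli1_carrier]])
qed

lemma trace_pauli2_mult:
  assumes "p \<in> nonid_pauli_labels" "q \<in> nonid_pauli_labels" "p \<noteq> q"
  shows "mat_trace (pauli2 p * pauli2 q) = 0"
proof -
  have bounds: "fst p \<le> 3" "snd p \<le> 3" "fst q \<le> 3" "snd q \<le> 3"
    using assms by (auto simp: nonid_pauli_labels_def)
  have "pauli2 p * pauli2 q = kron2 (pauli1 (fst p) * pauli1 (fst q)) (pauli1 (snd p) * pauli1 (snd q))"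
    unfolding pauli2_eq_kron2 by (rule kron2_mult) (rule pauli1_carrier)+
  then have "mat_trace (pauli2 p * pauli2 q) =
               mat_trace (pauli1 (fst p) * pauli1 (fst q)) * mat_trace (pauli1 (snd p) * pauli1 (snd q))"
    by (simp add: trace_kron2[OF mult_carrier_mat[OF pauli1_carrier pauli1_carrier]
                                 mult_carrier_mat[OF pauli1_carrier pauli1_carrier]])
  then show ?thesis
    using assms(3) by (simp add: trace_pauli1_mult bounds prod_eq_iff)
qed

lemma trace_pauli2:
  assumes "p \<in> nonid_pauli_labels"
  shows "mat_trace (pauli2 p) = 0"
proof -
  have "fst p \<le> 3" "snd p \<le> 3" "p \<noteq> (0, 0)"
    using assms by (auto simp: nonid_pauli_labels_def)
  then show ?thesis
    unfolding pauli2_eq_kron2 trace_kron2[OF pauli1_carrier pauli1_carrier]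
    by (cases p) (auto simp: trace_pauli1)
qed

lemma pauli_labels_commute_if_mult_commute:
  assumes p: "p \<in> nonid_pauli_labels" and q: "q \<in> nonid_pauli_labels"
    and commute: "pauli2 p * pauli2 q = pauli2 q * pauli2 p"
  shows "pauli_labels_commute p q"
proof (rule ccontr)
  assume "\<not> pauli_labels_commute p q"
  then have "pauli2 p * pauli2 q = (-1) \<cdot>\<^sub>m (pauli2 q * pauli2 p)"
    using pauli2_commutation[OF p q] by simp
  then have anti: "(-1) \<cdot>\<^sub>m (pauli2 q * pauli2 p) = pauli2 q * pauli2 p"
    unfolding commute by simp
  have P: "pauli2 p \<in> carrier_mat 4 4" and Q: "pauli2 q \<in> carrier_mat 4 4"
    by (rule pauli2_carrier)+
  have "(pauli2 q * pauli2 p) * (pauli2 p * pauli2 q) = pauli2 q * (pauli2 p * (pauli2 p * pauli2 q))"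
    by (rule assoc_mult_mat[OF Q P mult_carrier_mat[OF P Q]])
  also have "pauli2 p * (pauli2 p * pauli2 q) = pauli2 q"
    unfolding assoc_mult_mat[OF P P Q, symmetric] pauli2_square using Q by simp
  finally have inverse: "(pauli2 q * pauli2 p) * (pauli2 p * pauli2 q) = 1\<^sub>m 4"
    by (simp only: pauli2_square)
  have "(-1) \<cdot>\<^sub>m ((pauli2 q * pauli2 p) * (pauli2 p * pauli2 q)) = 1\<^sub>m 4"
    unfolding mult_smult_assoc_mat[OF mult_carrier_mat[OF Q P] mult_carrier_mat[OF P Q], symmetric] anti
    by (rule inverse)
  then have "((-1) \<cdot>\<^sub>m (1\<^sub>m 4 :: complex mat)) $$ (0, 0) = 1\<^sub>m 4 $$ (0, 0)"
    unfolding inverse by simp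
  then show False by simp
qed

subsection \<open>Commuting classes of labels\<close>

text \<open>With \<open>X, Y, Z\<close> labelled \<open>1, 2, 3\<close>, two distinct non-identity single-qubit Paulis multiply,
  up to a phase, to the one labelled \<open>6 - a - b\<close>.\<close>

definition pauli1_product_label :: "nat \<Rightarrow> nat \<Rightarrow> nat" where
  "pauli1_product_label a b = (if a = 0 then b else if b = 0 then a else if a = b then 0 else 6 - a - b)"

definition pauli2_product_label :: "nat \<times> nat \<Rightarrow> nat \<times> nat \<Rightarrow> nat \<times> nat" where
  "pauli2_product_label p q =
     (pauli1_product_label (fst p) (fst q), pauli1_product_label (snd p) (snd q))"

lemma nonid_pauli_labels_enum:
  "nonid_pauli_labels = {(0,1),(0,2),(0,3),(1,0),(1,1),(1,2),(1,3),(2,0),(2,1),(2,2),(2,3),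
                         (3,0),(3,1),(3,2),(3,3)}"
proof -
  have "{0..3::nat} = {0,1,2,3}" by auto
  then show ?thesis unfolding nonid_pauli_labels_def by auto
qed

lemma commuting_label_triple:
  assumes "a \<in> nonid_pauli_labels" "b \<in> nonid_pauli_labels" "c \<in> nonid_pauli_labels" "a \<noteq> b"
    and "pauli_labels_commute a b" "pauli_labels_commute a c" "pauli_labels_commute b c"
  shows "c = a \<or> c = b \<or> c = pauli2_product_label a b"
proof -
  have "\<forall>a\<in>nonid_pauli_labels. \<forall>b\<in>nonid_pauli_labels. \<forall>c\<in>nonid_pauli_labels.
          a \<noteq> b \<and> pauli_labels_commute a b \<and> pauli_labels_commute a c \<and> pauli_labels_commute b c \<longrightarrow>
          c = a \<or> c = b \<or> c = pauli2_product_label a b"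
    unfolding nonid_pauli_labels_enum
    by (simp add: pauli_labels_commute_def pauli1_anticommute_def pauli2_product_label_def
                  pauli1_product_label_def)
  then show ?thesis using assms by blast
qed

lemma max_commuting_class_labels_commute:
  assumes "max_commuting_class S" "p \<in> S" "q \<in> S"
  shows "pauli_labels_commute p q"
proof (rule pauli_labels_commute_if_mult_commute)
  show "p \<in> nonid_pauli_labels" "q \<in> nonid_pauli_labels"
    using assms unfolding max_commuting_class_def by auto
  show "pauli2 p * pauli2 q = pauli2 q * pauli2 p"
    using assms unfolding max_commuting_class_def by blast
qed

lemma anticommuting_label_in_max_class:
  assumes S: "max_commuting_class S" and c: "c \<in> nonid_pauli_labels" "c \<notin> S"
  shows "\<exists>t\<in>S. \<not> pauli_labels_commute t c"
proof (rule ccontr)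
  assume "\<not> (\<exists>t\<in>S. \<not> pauli_labels_commute t c)"
  then have tc: "\<forall>t\<in>S. pauli_labels_commute t c" by blast
  have "card S = 3" and S_labels: "S \<subseteq> nonid_pauli_labels"
    using S unfolding max_commuting_class_def by simp_all
  then obtain a b d where abd: "S = {a, b, d}" "a \<noteq> b" "b \<noteq> d" "a \<noteq> d"
    unfolding card_3_iff by blast
  have labels: "a \<in> nonid_pauli_labels" "b \<in> nonid_pauli_labels" "d \<in> nonid_pauli_labels"
    using S_labels abd by auto
  have commute: "pauli_labels_commute a b" "pauli_labels_commute a d" "pauli_labels_commute b d"
    using max_commuting_class_labels_commute[OF S] abd by auto
  have "d = pauli2_product_label a b"
    using commuting_label_triple[OF labels abd(2) commute] abd by blast
  moreover have "c = a \<or> c = b \<or> c = pauli2_product_label a b"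
    using commuting_label_triple[OF labels(1,2) c(1) abd(2) commute(1)] tc abd by auto
  ultimately show False using abd c(2) by auto
qed

subsection \<open>Linear algebra on \<open>\<complex>\<^sup>n\<close>\<close>

lemma mult_mat_vec_index:
  "A \<in> carrier_mat n n \<Longrightarrow> v \<in> carrier_vec n \<Longrightarrow> i < n \<Longrightarrow> (A *\<^sub>v v) $ i = (\<Sum>k<n. A $$ (i, k) * v $ k)"
  by (simp add: scalar_prod_def row_def lessThan_atLeast0)

lemma smult_mat_mult_vec:
  "A \<in> carrier_mat n m \<Longrightarrow> v \<in> carrier_vec m \<Longrightarrow> (a \<cdot>\<^sub>m A) *\<^sub>v v = a \<cdot>\<^sub>v (A *\<^sub>v v)"
  by (intro eq_vecI) (auto simp: scalar_prod_def sum_distrib_left algebra_simps)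

lemma braket_smult_left:
  "v \<in> carrier_vec n \<Longrightarrow> w \<in> carrier_vec n \<Longrightarrow> braket (a \<cdot>\<^sub>v v) w = cnj a * braket v w"
  unfolding braket_def by (simp add: sum_distrib_left algebra_simps)

lemma braket_smult_right: "braket v (a \<cdot>\<^sub>v w) = a * braket v w"
  unfolding braket_def by (simp add: sum_distrib_left algebra_simps)

lemma braket_hermitian:
  assumes A: "A \<in> carrier_mat n n" "hermitian_mat A" and v: "v \<in> carrier_vec n" and w: "w \<in> carrier_vec n"
  shows "braket (A *\<^sub>v v) w = braket v (A *\<^sub>v w)"
proof -
  have "braket (A *\<^sub>v v) w = (\<Sum>i<n. \<Sum>k<n. cnj (A $$ (i, k)) * cnj (v $ k) * w $ i)"
    using A v w by (simp add: braket_def mult_mat_vec_index sum_distrib_right del: index_mult_mat_vec)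
  also have "\<dots> = (\<Sum>i<n. \<Sum>k<n. A $$ (k, i) * cnj (v $ k) * w $ i)"
  proof (intro sum.cong refl)
    fix i k assume "i \<in> {..<n}" "k \<in> {..<n}"
    then have "i < dim_row A" "k < dim_row A" using A by auto
    then have "A $$ (k, i) = cnj (A $$ (i, k))" using A(2) unfolding hermitian_mat_def by blast
    then show "cnj (A $$ (i, k)) * cnj (v $ k) * w $ i = A $$ (k, i) * cnj (v $ k) * w $ i" by simp
  qed
  also have "\<dots> = (\<Sum>k<n. \<Sum>i<n. cnj (v $ k) * (A $$ (k, i) * w $ i))"
    by (subst sum.swap) (simp add: algebra_simps)
  also have "\<dots> = braket v (A *\<^sub>v w)"
    using A v w by (simp add: braket_def mult_mat_vec_index sum_distrib_left del: index_mult_mat_vec)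
  finally show ?thesis .
qed

lemma involution_eigenvalue:
  fixes A :: "'a :: field mat"
  assumes A: "A \<in> carrier_mat n n" "A * A = 1\<^sub>m n" and v: "v \<in> carrier_vec n" "v \<noteq> 0\<^sub>v n"
    and eigen: "A *\<^sub>v v = m \<cdot>\<^sub>v v"
  shows "m = 1 \<or> m = -1"
proof -
  have "v = (A * A) *\<^sub>v v" by (simp only: A(2) one_mult_mat_vec[OF v(1)])
  also have "\<dots> = A *\<^sub>v (A *\<^sub>v v)" using A(1) v(1) by simp
  also have "\<dots> = A *\<^sub>v (m \<cdot>\<^sub>v v)" using eigen by simp
  also have "\<dots> = (m * m) \<cdot>\<^sub>v v" using eigen mult_mat_vec[OF A(1) v(1)] by (simp add: smult_smult_assoc)
  finally have vv: "v = (m * m) \<cdot>\<^sub>v v" .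
  obtain i where i: "i < n" "v $ i \<noteq> 0"
    using v by (metis eq_vecI carrier_vecD index_zero_vec)
  have "v $ i = m * m * v $ i" using arg_cong[OF vv, of "\<lambda>w. w $ i"] i v by simp
  then have "m * m = 1" using i by simp
  then show ?thesis using square_eq_1_iff by blast
qed

lemma braket_eigenvectors_orthogonal:
  assumes A: "A \<in> carrier_mat n n" "hermitian_mat A" and v: "v \<in> carrier_vec n" and w: "w \<in> carrier_vec n"
    and eigen: "A *\<^sub>v v = m \<cdot>\<^sub>v v" "A *\<^sub>v w = l \<cdot>\<^sub>v w" and real: "cnj m = m" and ml: "m \<noteq> l"
  shows "braket v w = 0"
proof -
  have "m * braket v w = l * braket v w"
    using braket_hermitian[OF A v w] eigen v w real by (simp add: braket_smult_left braket_smult_right)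
  then have "(m - l) * braket v w = 0" by (simp add: algebra_simps)
  then show ?thesis using ml by simp
qed

lemma cnj_mult_self: "cnj z * z = complex_of_real ((cmod z)\<^sup>2)"
  by (metis complex_norm_square mult.commute)

lemma orthonormal_basis4_carrier: "orthonormal_basis4 b \<Longrightarrow> j < 4 \<Longrightarrow> b j \<in> carrier_vec 4"
  unfolding orthonormal_basis4_def by auto

text \<open>Orthonormal rows form a unitary matrix, whose columns are then orthonormal as well.\<close>

lemma orthonormal_basis4_completeness:
  assumes ob: "orthonormal_basis4 b" and i: "i < 4" and k: "k < 4"
  shows "(\<Sum>j<4. b j $ i * cnj (b j $ k)) = (if i = k then 1 else 0)"
proof -
  define U where "U = mat 4 4 (\<lambda>(j, i). cnj (b j $ i))"
  define V where "V = mat 4 4 (\<lambda>(i, j). b j $ i)"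
  have U: "U \<in> carrier_mat 4 4" and V: "V \<in> carrier_mat 4 4" unfolding U_def V_def by auto
  have "U * V = 1\<^sub>m 4"
  proof (rule eq_matI)
    fix j k assume "j < dim_row (1\<^sub>m 4 :: complex mat)" "k < dim_col (1\<^sub>m 4 :: complex mat)"
    then have jk: "j < 4" "k < 4" by auto
    then have "(U * V) $$ (j, k) = braket (b j) (b k)"
      using orthonormal_basis4_carrier[OF ob jk(2)]
      unfolding U_def V_def by (simp add: scalar_prod_def lessThan_atLeast0 braket_def)
    then show "(U * V) $$ (j, k) = 1\<^sub>m 4 $$ (j, k)" using ob jk unfolding orthonormal_basis4_def by simp
  qed (auto simp: U_def V_def)
  then have "V * U = 1\<^sub>m 4" using mat_mult_left_right_inverse[OF U V] by simp
  moreover have "(V * U) $$ (i, k) = (\<Sum>j<4. b j $ i * cnj (b j $ k))"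
    using i k unfolding U_def V_def by (simp add: scalar_prod_def lessThan_atLeast0)
  ultimately show ?thesis using i k by simp
qed

lemma sum_rotate3: "(\<Sum>j\<in>A. \<Sum>k\<in>B. \<Sum>i\<in>C. f j k i) = (\<Sum>k\<in>B. \<Sum>i\<in>C. \<Sum>j\<in>A. f j k i)"
  by (subst sum.swap) (simp only: sum.swap[of _ A C])

lemma sum_delta_lessThan_4:
  "(\<Sum>k<(4::nat). f k * (if i = k then 1 else 0)) = (if i < 4 then f i else (0::complex))"
proof -
  have "(\<Sum>k<(4::nat). f k * (if i = k then 1 else 0)) = (\<Sum>k<4. if i = k then f k else 0)"
    by (intro sum.cong) auto
  then show ?thesis by simp
qed

lemma parseval4:
  assumes ob: "orthonormal_basis4 b" and v: "v \<in> carrier_vec 4" and w: "w \<in> carrier_vec 4"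
  shows "braket v w = (\<Sum>j<4. cnj (braket (b j) v) * braket (b j) w)"
proof -
  have "(\<Sum>j<4. cnj (braket (b j) v) * braket (b j) w)
      = (\<Sum>j<4. (\<Sum>i<4. b j $ i * cnj (v $ i)) * (\<Sum>k<4. cnj (b j $ k) * w $ k))"
    using v w by (simp add: braket_def)
  also have "\<dots> = (\<Sum>j<4. \<Sum>i<4. \<Sum>k<4. cnj (v $ i) * w $ k * (b j $ i * cnj (b j $ k)))"
    unfolding sum_product by (intro sum.cong refl) (simp add: algebra_simps)
  also have "\<dots> = (\<Sum>i<4. \<Sum>k<4. cnj (v $ i) * w $ k * (\<Sum>j<4. b j $ i * cnj (b j $ k)))"
    by (subst sum_rotate3) (simp add: sum_distrib_left)
  also have "\<dots> = (\<Sum>i<4. cnj (v $ i) * w $ i)"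
    by (simp add: orthonormal_basis4_completeness[OF ob] sum_delta_lessThan_4)
  finally show ?thesis using w by (simp add: braket_def)
qed

lemma trace_in_orthonormal_basis4:
  assumes ob: "orthonormal_basis4 b" and X: "X \<in> carrier_mat 4 4"
  shows "(\<Sum>j<4. braket (b j) (X *\<^sub>v b j)) = mat_trace X"
proof -
  have "(\<Sum>j<4. braket (b j) (X *\<^sub>v b j))
      = (\<Sum>j<4. \<Sum>i<4. \<Sum>k<4. X $$ (i, k) * (b j $ k * cnj (b j $ i)))"
    using X orthonormal_basis4_carrier[OF ob]
    by (intro sum.cong refl) (simp add: braket_def mult_mat_vec_index sum_distrib_left
                                        algebra_simps del: index_mult_mat_vec)
  also have "\<dots> = (\<Sum>i<4. \<Sum>k<4. X $$ (i, k) * (\<Sum>j<4. b j $ k * cnj (b j $ i)))"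
    by (subst sum_rotate3) (simp add: sum_distrib_left)
  also have "\<dots> = mat_trace X"
    using X by (simp add: orthonormal_basis4_completeness[OF ob] sum_delta_lessThan_4 mat_trace_def
                          if_distrib[of "\<lambda>x. _ * x"] eq_commute[of _ "_::nat"] cong: if_cong)
  finally show ?thesis .
qed

subsection \<open>Joint eigenbases of a commuting and an anticommuting pair of involutions\<close>

text \<open>\<open>(1 + m \<mu>\<^sub>j)(1 + n \<nu>\<^sub>j)\<close> is \<open>4\<close> where \<open>(\<mu>\<^sub>j, \<nu>\<^sub>j) = (m, n)\<close> and \<open>0\<close> elsewhere, and the
  vanishing sums make its total \<open>4\<close>.\<close>

lemma sign_pattern_unique:
  fixes \<mu> \<nu> :: "nat \<Rightarrow> complex"
  assumes signs: "\<And>j. j < 4 \<Longrightarrow> (\<mu> j = 1 \<or> \<mu> j = -1) \<and> (\<nu> j = 1 \<or> \<nu> j = -1)"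
    and sums: "(\<Sum>j<4. \<mu> j) = 0" "(\<Sum>j<4. \<nu> j) = 0" "(\<Sum>j<4. \<mu> j * \<nu> j) = 0"
    and m: "m = 1 \<or> m = -1" and n: "n = 1 \<or> n = -1"
  shows "\<exists>!j. j < 4 \<and> \<mu> j = m \<and> \<nu> j = n"
proof -
  define P where "P j \<longleftrightarrow> \<mu> j = m \<and> \<nu> j = n" for j
  have "(\<Sum>j<4. if P j then (4::complex) else 0) = (\<Sum>j<4. (1 + m * \<mu> j) * (1 + n * \<nu> j))"
  proof (intro sum.cong refl)
    fix j :: nat assume "j \<in> {..<4}"
    then have "(\<mu> j = 1 \<or> \<mu> j = -1) \<and> (\<nu> j = 1 \<or> \<nu> j = -1)" using signs by simp
    then show "(if P j then 4 else 0) = (1 + m * \<mu> j) * (1 + n * \<nu> j)"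
      using m n unfolding P_def by auto
  qed
  also have "\<dots> = 4 + m * (\<Sum>j<4. \<mu> j) + n * (\<Sum>j<4. \<nu> j) + m * n * (\<Sum>j<4. \<mu> j * \<nu> j)"
    unfolding sum_lessThan_4 by (simp add: algebra_simps)
  finally have "(\<Sum>j<4. if P j then (4::complex) else 0) = 4"
    using sums by simp
  then have "\<exists>!j. j < 4 \<and> P j"
    unfolding sum_lessThan_4 less_4_cases
    by (cases "P 0"; cases "P 1"; cases "P 2"; cases "P 3") auto
  then show ?thesis unfolding P_def .
qed

locale joint_eigenbasis =
  fixes s c t :: "complex mat" and b :: "nat \<Rightarrow> complex vec" and \<mu> \<nu> :: "nat \<Rightarrow> complex"
  assumes carrier: "s \<in> carrier_mat 4 4" "c \<in> carrier_mat 4 4" "t \<in> carrier_mat 4 4"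
    and hermitian: "hermitian_mat s" "hermitian_mat c" "hermitian_mat t"
    and involution: "s * s = 1\<^sub>m 4" "c * c = 1\<^sub>m 4" "t * t = 1\<^sub>m 4"
    and s_t_commute: "s * t = t * s"
    and c_t_anticommute: "c * t = (-1) \<cdot>\<^sub>m (t * c)"
    and traceless: "mat_trace s = 0" "mat_trace c = 0" "mat_trace (s * c) = 0"
    and basis: "orthonormal_basis4 b"
    and s_eigen: "\<And>j. j < 4 \<Longrightarrow> s *\<^sub>v b j = \<mu> j \<cdot>\<^sub>v b j"
    and c_eigen: "\<And>j. j < 4 \<Longrightarrow> c *\<^sub>v b j = \<nu> j \<cdot>\<^sub>v b j"
begin

lemma basis_carrier: "j < 4 \<Longrightarrow> b j \<in> carrier_vec 4"
  using orthonormal_basis4_carrier[OF basis] .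

lemma basis_normalized: "j < 4 \<Longrightarrow> braket (b j) (b j) = 1"
  using basis unfolding orthonormal_basis4_def by auto

lemma basis_nonzero: "j < 4 \<Longrightarrow> b j \<noteq> 0\<^sub>v 4"
  using basis_normalized[of j] by (auto simp: braket_def)

lemma eigenvalue_signs: "j < 4 \<Longrightarrow> (\<mu> j = 1 \<or> \<mu> j = -1) \<and> (\<nu> j = 1 \<or> \<nu> j = -1)"
  using involution_eigenvalue[OF carrier(1) involution(1) basis_carrier basis_nonzero s_eigen]
        involution_eigenvalue[OF carrier(2) involution(2) basis_carrier basis_nonzero c_eigen]
  by blast

lemma eigenvalue_sums:
  "(\<Sum>j<4. \<mu> j) = 0" "(\<Sum>j<4. \<nu> j) = 0" "(\<Sum>j<4. \<mu> j * \<nu> j) = 0"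
proof -
  have sc_eigen: "(s * c) *\<^sub>v b j = (\<mu> j * \<nu> j) \<cdot>\<^sub>v b j" if "j < 4" for j
    using that carrier basis_carrier[OF that]
    by (simp add: assoc_mult_mat_vec c_eigen s_eigen mult_mat_vec smult_smult_assoc mult.commute)
  have "(\<Sum>j<4. \<mu> j) = (\<Sum>j<4. braket (b j) (s *\<^sub>v b j))"
    by (intro sum.cong refl) (simp add: s_eigen basis_normalized braket_smult_right)
  then show "(\<Sum>j<4. \<mu> j) = 0"
    using trace_in_orthonormal_basis4[OF basis carrier(1)] traceless(1) by simp
  have "(\<Sum>j<4. \<nu> j) = (\<Sum>j<4. braket (b j) (c *\<^sub>v b j))"
    by (intro sum.cong refl) (simp add: c_eigen basis_normalized braket_smult_right)
  then show "(\<Sum>j<4. \<nu> j) = 0"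
    using trace_in_orthonormal_basis4[OF basis carrier(2)] traceless(2) by simp
  have "(\<Sum>j<4. \<mu> j * \<nu> j) = (\<Sum>j<4. braket (b j) ((s * c) *\<^sub>v b j))"
    by (intro sum.cong refl) (simp add: sc_eigen basis_normalized braket_smult_right)
  then show "(\<Sum>j<4. \<mu> j * \<nu> j) = 0"
    using trace_in_orthonormal_basis4[OF basis mult_carrier_mat[OF carrier(1,2)]] traceless(3) by simp
qed

lemma sign_pattern_index_unique:
  "m = 1 \<or> m = -1 \<Longrightarrow> n = 1 \<or> n = -1 \<Longrightarrow> \<exists>!j. j < 4 \<and> \<mu> j = m \<and> \<nu> j = n"
  using sign_pattern_unique[OF eigenvalue_signs eigenvalue_sums] .

lemma basis_overlap_vanishes:
  assumes v: "v \<in> carrier_vec 4" and j: "j < 4"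
  shows "s *\<^sub>v v = l \<cdot>\<^sub>v v \<Longrightarrow> \<mu> j \<noteq> l \<Longrightarrow> braket (b j) v = 0"
    and "c *\<^sub>v v = l \<cdot>\<^sub>v v \<Longrightarrow> \<nu> j \<noteq> l \<Longrightarrow> braket (b j) v = 0"
  using braket_eigenvectors_orthogonal[OF carrier(1) hermitian(1) basis_carrier[OF j] v s_eigen[OF j]]
        braket_eigenvectors_orthogonal[OF carrier(2) hermitian(2) basis_carrier[OF j] v c_eigen[OF j]]
        eigenvalue_signs[OF j] by auto

lemma t_basis_eigen:
  assumes j: "j < 4"
  shows "s *\<^sub>v (t *\<^sub>v b j) = \<mu> j \<cdot>\<^sub>v (t *\<^sub>v b j)"
    and "c *\<^sub>v (t *\<^sub>v b j) = (- \<nu> j) \<cdot>\<^sub>v (t *\<^sub>v b j)"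
proof -
  note bj = basis_carrier[OF j]
  have "s *\<^sub>v (t *\<^sub>v b j) = (s * t) *\<^sub>v b j" using carrier bj by simp
  also have "\<dots> = t *\<^sub>v (s *\<^sub>v b j)" unfolding s_t_commute using carrier bj by simp
  finally show "s *\<^sub>v (t *\<^sub>v b j) = \<mu> j \<cdot>\<^sub>v (t *\<^sub>v b j)"
    using s_eigen[OF j] mult_mat_vec[OF carrier(3) bj] by simp
  have "c *\<^sub>v (t *\<^sub>v b j) = (c * t) *\<^sub>v b j" using carrier bj by simp
  also have "\<dots> = (-1) \<cdot>\<^sub>v (t *\<^sub>v (c *\<^sub>v b j))"
    unfolding c_t_anticommute smult_mat_mult_vec[OF mult_carrier_mat[OF carrier(3,2)] bj]
    using carrier bj by simp
  finally show "c *\<^sub>v (t *\<^sub>v b j) = (- \<nu> j) \<cdot>\<^sub>v (t *\<^sub>v b j)"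
    using c_eigen[OF j] mult_mat_vec[OF carrier(3) bj] by (simp add: smult_smult_assoc)
qed

lemma t_basis_overlaps:
  assumes j: "j < 4" and k: "k < 4" and pattern: "\<mu> k = \<mu> j" "\<nu> k = - \<nu> j"
  shows "\<And>i. i < 4 \<Longrightarrow> i \<noteq> k \<Longrightarrow> braket (b i) (t *\<^sub>v b j) = 0"
    and "cmod (braket (b k) (t *\<^sub>v b j)) = 1"
proof -
  have tb: "t *\<^sub>v b j \<in> carrier_vec 4" using carrier basis_carrier[OF j] by simp
  have unique: "\<exists>!i. i < 4 \<and> \<mu> i = \<mu> j \<and> \<nu> i = - \<nu> j"
    by (rule sign_pattern_index_unique) (use eigenvalue_signs[OF j] in auto)
  show vanish: "braket (b i) (t *\<^sub>v b j) = 0" if i: "i < 4" "i \<noteq> k" for i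
  proof (cases "\<mu> i = \<mu> j")
    case True
    then have "\<nu> i \<noteq> - \<nu> j" using unique i k pattern by blast
    then show ?thesis using basis_overlap_vanishes(2)[OF tb i(1) t_basis_eigen(2)[OF j]] by simp
  next
    case False
    then show ?thesis using basis_overlap_vanishes(1)[OF tb i(1) t_basis_eigen(1)[OF j]] by simp
  qed
  have "1 = braket (b j) ((t * t) *\<^sub>v b j)"
    using basis_normalized[OF j] basis_carrier[OF j] involution(3) by simp
  also have "\<dots> = braket (t *\<^sub>v b j) (t *\<^sub>v b j)"
    using braket_hermitian[OF carrier(3) hermitian(3) basis_carrier[OF j] tb] carrier basis_carrier[OF j]
    by simp
  also have "\<dots> = (\<Sum>i<4. cnj (braket (b i) (t *\<^sub>v b j)) * braket (b i) (t *\<^sub>v b j))"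
    using parseval4[OF basis tb tb] .
  also have "\<dots> = (\<Sum>i\<in>{k}. cnj (braket (b i) (t *\<^sub>v b j)) * braket (b i) (t *\<^sub>v b j))"
    by (rule sum.mono_neutral_right) (use k vanish in auto)
  finally have "complex_of_real ((cmod (braket (b k) (t *\<^sub>v b j)))\<^sup>2) = 1"
    by (simp add: cnj_mult_self)
  then have "(cmod (braket (b k) (t *\<^sub>v b j)))\<^sup>2 = 1" by (metis of_real_eq_1_iff)
  then show "cmod (braket (b k) (t *\<^sub>v b j)) = 1"
    using norm_ge_zero[of "braket (b k) (t *\<^sub>v b j)"] by (auto simp: power2_eq_1_iff)
qed

lemma overlap_norm_flip:
  assumes \<psi>: "\<psi> \<in> carrier_vec 4" and \<tau>: "t *\<^sub>v \<psi> = \<tau> \<cdot>\<^sub>v \<psi>" "\<tau> = 1 \<or> \<tau> = -1"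
    and j: "j < 4" and k: "k < 4" and pattern: "\<mu> k = \<mu> j" "\<nu> k = - \<nu> j"
  shows "cmod (braket (b j) \<psi>) = cmod (braket (b k) \<psi>)"
proof -
  note overlaps = t_basis_overlaps[OF j k pattern]
  have tb: "t *\<^sub>v b j \<in> carrier_vec 4" using carrier basis_carrier[OF j] by simp
  have "\<tau> * braket (b j) \<psi> = braket (t *\<^sub>v b j) \<psi>"
    using braket_hermitian[OF carrier(3) hermitian(3) basis_carrier[OF j] \<psi>] \<tau>(1)
    by (simp add: braket_smult_right)
  also have "\<dots> = (\<Sum>i<4. cnj (braket (b i) (t *\<^sub>v b j)) * braket (b i) \<psi>)"
    using parseval4[OF basis tb \<psi>] .
  also have "\<dots> = (\<Sum>i\<in>{k}. cnj (braket (b i) (t *\<^sub>v b j)) * braket (b i) \<psi>)"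
    by (rule sum.mono_neutral_right) (use k overlaps(1) in auto)
  finally have "cmod (\<tau> * braket (b j) \<psi>) = cmod (cnj (braket (b k) (t *\<^sub>v b j)) * braket (b k) \<psi>)"
    by simp
  then show ?thesis using overlaps(2) \<tau>(2) by (auto simp: norm_mult)
qed

lemma collision_sum_half:
  assumes \<psi>: "unit_vec4 \<psi>" and eigen: "eigenvector_of s \<psi>" "eigenvector_of t \<psi>"
  shows "(\<Sum>j<4. cmod (braket (b j) \<psi>) ^ 4) = 1/2"
proof -
  have \<psi>C: "\<psi> \<in> carrier_vec 4" using \<psi> unit_vec4_def by auto
  obtain l \<tau> where l: "s *\<^sub>v \<psi> = l \<cdot>\<^sub>v \<psi>" and \<tau>: "t *\<^sub>v \<psi> = \<tau> \<cdot>\<^sub>v \<psi>" and nonzero: "\<psi> \<noteq> 0\<^sub>v 4"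
    using eigen \<psi>C unfolding eigenvector_of_def by auto
  have l_sign: "l = 1 \<or> l = -1" by (rule involution_eigenvalue[OF carrier(1) involution(1) \<psi>C nonzero l])
  have \<tau>_sign: "\<tau> = 1 \<or> \<tau> = -1" by (rule involution_eigenvalue[OF carrier(3) involution(3) \<psi>C nonzero \<tau>])
  obtain p where p: "p < 4" "\<mu> p = l" "\<nu> p = 1"
    and p_unique: "\<And>i. i < 4 \<Longrightarrow> \<mu> i = l \<Longrightarrow> \<nu> i = 1 \<Longrightarrow> i = p"
    using sign_pattern_index_unique[OF l_sign, of 1] by blast
  obtain m where m: "m < 4" "\<mu> m = l" "\<nu> m = -1"
    and m_unique: "\<And>i. i < 4 \<Longrightarrow> \<mu> i = l \<Longrightarrow> \<nu> i = -1 \<Longrightarrow> i = m"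
    using sign_pattern_index_unique[OF l_sign, of "-1"] by blast
  have pm: "p \<noteq> m" using p(3) m(3) by auto
  define q where "q j = braket (b j) \<psi>" for j
  have q_vanish: "\<forall>i\<in>{..<4} - {p, m}. q i = 0"
  proof
    fix i assume "i \<in> {..<4} - {p, m}"
    then have i: "i < 4" "i \<noteq> p" "i \<noteq> m" by auto
    show "q i = 0"
    proof (cases "\<mu> i = l")
      case True
      then have "\<nu> i \<noteq> 1" "\<nu> i \<noteq> -1" using i p_unique m_unique by blast+
      then show ?thesis using eigenvalue_signs[OF i(1)] by blast
    next
      case False
      then show ?thesis unfolding q_def using basis_overlap_vanishes(1)[OF \<psi>C i(1) l] by simp
    qed
  qed
  have equal: "cmod (q p) = cmod (q m)"
    unfolding q_def by (rule overlap_norm_flip[OF \<psi>C \<tau> \<tau>_sign p(1) m(1)]) (use p m in auto)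
  have "1 = braket \<psi> \<psi>" using \<psi> unit_vec4_def by simp
  also have "\<dots> = (\<Sum>i<4. cnj (q i) * q i)" unfolding q_def by (rule parseval4[OF basis \<psi>C \<psi>C])
  also have "\<dots> = (\<Sum>i\<in>{p, m}. cnj (q i) * q i)"
    by (rule sum.mono_neutral_right) (use p m q_vanish in auto)
  also have "\<dots> = complex_of_real ((cmod (q p))\<^sup>2 + (cmod (q m))\<^sup>2)"
    using pm by (simp add: cnj_mult_self)
  finally have "(cmod (q p))\<^sup>2 + (cmod (q m))\<^sup>2 = 1" by (metis of_real_eq_1_iff)
  with equal have half: "(cmod (q p))\<^sup>2 = 1/2" "(cmod (q m))\<^sup>2 = 1/2" by auto
  have "(\<Sum>j<4. cmod (q j) ^ 4) = (\<Sum>j\<in>{p, m}. cmod (q j) ^ 4)"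
    by (rule sum.mono_neutral_right) (use p m q_vanish in auto)
  also have "\<dots> = ((cmod (q p))\<^sup>2)\<^sup>2 + ((cmod (q m))\<^sup>2)\<^sup>2" using pm by simp
  also have "\<dots> = 1/2" unfolding half by (simp add: power2_eq_square)
  finally show ?thesis unfolding q_def .
qed

end

lemma pauli_labels_commute_sym: "pauli_labels_commute p q \<longleftrightarrow> pauli_labels_commute q p"
  unfolding pauli_labels_commute_def pauli1_anticommute_def by auto

lemma max_commuting_class_anticommuting_partner:
  assumes C: "max_commuting_class C" and S: "max_commuting_class S" and one: "card (S \<inter> C) = 1"
  obtains s c t where "s \<in> S" "s \<in> C" "c \<in> C" "c \<noteq> s" "t \<in> S" "\<not> pauli_labels_commute t c"
proof -
  obtain s where s: "S \<inter> C = {s}" using one card_1_singletonE by blast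
  have "card C = 3" "s \<in> C" using C s unfolding max_commuting_class_def by auto
  then have "card (C - {s}) = 2" by (simp add: card_Diff_singleton_if)
  then have "C - {s} \<noteq> {}" by (metis card.empty zero_neq_numeral)
  then obtain c where c: "c \<in> C" "c \<noteq> s" by blast
  moreover have "c \<notin> S" using s c by auto
  moreover have "c \<in> nonid_pauli_labels" using C c unfolding max_commuting_class_def by auto
  ultimately obtain t where "t \<in> S" "\<not> pauli_labels_commute t c"
    using anticommuting_label_in_max_class[OF S] by blast
  then show ?thesis using that s c by blast
qed

lemma common_eigenbasis_collision_entropy:
  assumes C: "max_commuting_class C" and S: "max_commuting_class S" and one: "card (S \<inter> C) = 1"
    and bas: "common_eigenbasis C b" and \<psi>: "unit_vec4 \<psi>"
    and eigen: "\<forall>p\<in>S. eigenvector_of (pauli2 p) \<psi>"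
  shows "collision_entropy b \<psi> = 1"
proof -
  obtain s c t where sct: "s \<in> S" "s \<in> C" "c \<in> C" "c \<noteq> s" "t \<in> S" "\<not> pauli_labels_commute t c"
    using max_commuting_class_anticommuting_partner[OF C S one] .
  have labels: "s \<in> nonid_pauli_labels" "c \<in> nonid_pauli_labels" "t \<in> nonid_pauli_labels"
    using C S sct unfolding max_commuting_class_def by auto
  have "\<forall>j\<in>{..<4}. \<exists>e. pauli2 s *\<^sub>v b j = e \<cdot>\<^sub>v b j" "\<forall>j\<in>{..<4}. \<exists>e. pauli2 c *\<^sub>v b j = e \<cdot>\<^sub>v b j"
    using bas sct unfolding common_eigenbasis_def eigenvector_of_def by auto
  then obtain \<mu> \<nu> where \<mu>: "\<forall>j\<in>{..<4}. pauli2 s *\<^sub>v b j = \<mu> j \<cdot>\<^sub>v b j"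
    and \<nu>: "\<forall>j\<in>{..<4}. pauli2 c *\<^sub>v b j = \<nu> j \<cdot>\<^sub>v b j"
    by metis
  interpret joint_eigenbasis "pauli2 s" "pauli2 c" "pauli2 t" b \<mu> \<nu>
  proof
    show "pauli2 s * pauli2 t = pauli2 t * pauli2 s"
      using S sct unfolding max_commuting_class_def by blast
    show "pauli2 c * pauli2 t = (-1) \<cdot>\<^sub>m (pauli2 t * pauli2 c)"
      using pauli2_commutation[OF labels(2,3)] sct(6) pauli_labels_commute_sym by simp
    show "mat_trace (pauli2 s * pauli2 c) = 0"
      using trace_pauli2_mult[OF labels(1,2)] sct(4) by simp
    show "orthonormal_basis4 b" using bas unfolding common_eigenbasis_def by blast
  qed (use \<mu> \<nu> labels in \<open>auto simp: pauli2_carrier pauli2_hermitian pauli2_square trace_pauli2\<close>)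
  have "(\<Sum>j<4. cmod (braket (b j) \<psi>) ^ 4) = 1/2"
    by (rule collision_sum_half[OF \<psi>]) (use eigen sct in auto)
  then have "collision_entropy b \<psi> = - log 2 (1/2)"
    unfolding collision_entropy_def by (simp only:)
  also have "\<dots> = 1" by (simp add: log_recip)
  finally show ?thesis .
qed

theorem theorem6:
  fixes C :: "nat \<Rightarrow> (nat \<times> nat) set" and S :: "(nat \<times> nat) set"
    and B :: "nat \<Rightarrow> nat \<Rightarrow> complex vec" and \<psi> :: "complex vec"
  assumes classes: "\<forall>i\<in>{1,2,3::nat}. max_commuting_class (C i)"
    and disjoint: "\<forall>i\<in>{1,2,3::nat}. \<forall>j\<in>{1,2,3::nat}. i \<noteq> j \<longrightarrow> C i \<inter> C j = {}"
    and S_class: "max_commuting_class S"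
    and S_one_each: "\<forall>i\<in>{1,2,3::nat}. card (S \<inter> C i) = 1"
    and bases: "\<forall>i\<in>{1,2,3::nat}. common_eigenbasis (C i) (B i)"
    and psi_unit: "unit_vec4 \<psi>"
    and psi_eig: "\<forall>p\<in>S. eigenvector_of (pauli2 p) \<psi>"
  shows "(1/3) * (\<Sum>i\<in>{1,2,3::nat}. collision_entropy (B i) \<psi>) = 1"
proof -
  have "\<forall>i\<in>{1,2,3::nat}. collision_entropy (B i) \<psi> = 1"
    using common_eigenbasis_collision_entropy classes S_class S_one_each bases psi_unit psi_eig by blast
  then show ?thesis by simp
qed

end
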